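(* Let $L:\mathbb{R}^d\to\mathbb{R}^{\mathcal{Y}}_+$ be a polyhedral loss, $\gamma:\Delta_{\mathcal{Y}}\rightrightarrows\mathcal{R}$ a finite property, and $\epsilon>0$. Let $\Psi$ be the link envelope of the general $\epsilon$-thickened link construction for $L,\gamma,\epsilon,\|\cdot\|_\infty$. Then a function $\psi:\mathbb{R}^d\to\mathcal{R}$ is produced by this construction (i.e., $\psi(u)\in\Psi(u)$ for all $u\in\mathbb{R}^d$) if and only if $\psi$ is $\epsilon$-separated with respect to $\mathrm{prop}[L]$ and $\gamma$.
   Context: $\mathcal{Y}$ is a finite label set, $\Delta_{\mathcal{Y}}$ the simplex, $\mathbb{R}^{\mathcal{Y}}_+$ the nonnegative orthant. A property $\gamma:\Delta_{\mathcal{Y}}\rightrightarrows\mathcal{R}$ maps each $p$ to a nonempty subset of $\mathcal{R}$; finite if $\mathcal{R}$ finite; level sets $\gamma_r=\{p:r\in\gamma(p)\}$. $L$ polyhedral: each coordinate is a max of finitely many affine functions; it elicits $\Gamma=\mathrm{prop}[L]$, $\Gamma(p)=\arg\min_u\langle p,L(u)\rangle$. Construction: $\mathcal{U}=\{\Gamma(p):p\in\Delta_{\mathcal{Y}}\}$, $\Gamma_U=\{p:\Gamma(p)=U\}$, $R_U=\{r\in\mathcal{R}:\Gamma_U\subseteq\gamma_r\}$; initialize $\Psi(u)=\mathcal{R}$ for all $u$; for each $U\in\mathcal{U}$ and each $u$ with $\inf_{u^*\in U}\|u^*-u\|_\infty<\epsilon$ set $\Psi(u)\leftarrow\Psi(u)\cap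 R_U$. A link $\psi$ is $\epsilon$-separated with respect to $\Gamma$ and $\gamma$ if for all $u$, $p$ with $\psi(u)\notin\gamma(p)$ we have $\inf_{a\in\Gamma(p)}\|u-a\|_\infty\ge\epsilon$. *)

theory Defs
  imports "HOL-Analysis.Analysis"
begin

definition prob_simplex :: "('y::finite \<Rightarrow> real) set" where
  "prob_simplex = {p. (\<forall>y. 0 \<le> p y) \<and> (\<Sum>y\<in>UNIV. p y) = 1}"

definition polyhedral_loss :: "(real^'d \<Rightarrow> ('y::finite \<Rightarrow> real)) \<Rightarrow> bool" where
  "polyhedral_loss L \<longleftrightarrow>
     (\<forall>y. \<exists>S :: ((real^'d) \<times> real) set. finite S \<and> S \<noteq> {} \<and>
        (\<forall>u. L u y = Max ((\<lambda>(a,b). a \<bullet> u + b) ` S)))"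

definition nonneg_loss :: "(real^'d \<Rightarrow> ('y::finite \<Rightarrow> real)) \<Rightarrow> bool" where
  "nonneg_loss L \<longleftrightarrow> (\<forall>u y. 0 \<le> L u y)"

definition exp_loss :: "(real^'d \<Rightarrow> ('y::finite \<Rightarrow> real)) \<Rightarrow> ('y \<Rightarrow> real) \<Rightarrow> real^'d \<Rightarrow> real" where
  "exp_loss L p u = (\<Sum>y\<in>UNIV. p y * L u y)"

definition prop_L :: "(real^'d \<Rightarrow> ('y::finite \<Rightarrow> real)) \<Rightarrow> ('y \<Rightarrow> real) \<Rightarrow> (real^'d) set" where
  "prop_L L p = {u. \<forall>u'. exp_loss L p u \<le> exp_loss L p u'}"

definition is_property :: "(('y::finite \<Rightarrow> real) \<Rightarrow> 'r set) \<Rightarrow> bool" where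
  "is_property \<gamma> \<longleftrightarrow> (\<forall>p\<in>prob_simplex. \<gamma> p \<noteq> {})"

definition level_set :: "(('y::finite \<Rightarrow> real) \<Rightarrow> 'r set) \<Rightarrow> 'r \<Rightarrow> ('y \<Rightarrow> real) set" where
  "level_set \<gamma> r = {p\<in>prob_simplex. r \<in> \<gamma> p}"

definition cal_U :: "(real^'d \<Rightarrow> ('y::finite \<Rightarrow> real)) \<Rightarrow> (real^'d) set set" where
  "cal_U L = {prop_L L p | p. p \<in> prob_simplex}"

definition Gamma_cell :: "(real^'d \<Rightarrow> ('y::finite \<Rightarrow> real)) \<Rightarrow> (real^'d) set \<Rightarrow> ('y \<Rightarrow> real) set" where
  "Gamma_cell L U = {p\<in>prob_simplex. prop_L L p = U}"

definition R_cell :: "(real^'d \<Rightarrow> ('y::finite \<Rightarrow> real)) \<Rightarrow> (('y \<Rightarrow> real) \<Rightarrow> 'r set) \<Rightarrow> (real^'d) set \<Rightarrow> 'r set" where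
  "R_cell L \<gamma> U = {r. Gamma_cell L U \<subseteq> level_set \<gamma> r}"

definition link_envelope ::
  "(real^'d \<Rightarrow> ('y::finite \<Rightarrow> real)) \<Rightarrow> (('y \<Rightarrow> real) \<Rightarrow> 'r set) \<Rightarrow> real \<Rightarrow> real^'d \<Rightarrow> 'r set" where
  "link_envelope L \<gamma> \<epsilon> u =
     UNIV \<inter> \<Inter> {R_cell L \<gamma> U | U. U \<in> cal_U L \<and> (INF a\<in>U. infnorm (a - u)) < \<epsilon>}"

definition eps_separated ::
  "(real^'d \<Rightarrow> 'r) \<Rightarrow> (('y::finite \<Rightarrow> real) \<Rightarrow> (real^'d) set) \<Rightarrow> (('y \<Rightarrow> real) \<Rightarrow> 'r set) \<Rightarrow> real \<Rightarrow> bool" where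
  "eps_separated \<psi> \<Gamma> \<gamma> \<epsilon> \<longleftrightarrow>
     (\<forall>u. \<forall>p\<in>prob_simplex. \<psi> u \<notin> \<gamma> p \<longrightarrow> (INF a\<in>\<Gamma> p. infnorm (u - a)) \<ge> \<epsilon>)"

end

theory Submission
  imports Defs
begin

text \<open>The cells \<open>\<Gamma>\<^sub>U\<close> partition the simplex, so intersecting the sets \<open>R\<^sub>U\<close> over all cells
  whose \<open>U\<close> comes within \<open>\<epsilon>\<close> of \<open>u\<close> is the same as requiring \<open>r \<in> \<gamma>(p)\<close> for every
  distribution \<open>p\<close> with \<open>\<Gamma>(p)\<close> within \<open>\<epsilon>\<close> of \<open>u\<close>. Hence \<open>\<Psi>(u)\<close> is exactly the set of reports
  allowed at \<open>u\<close> by \<open>\<epsilon>\<close>-separation, which is this condition read contrapositively.\<close>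

lemma INF_infnorm_commute:
  "(INF a\<in>U. infnorm (a - u)) = (INF a\<in>U. infnorm (u - a))"
  by (simp add: infnorm_sub)

lemma mem_R_cell_iff:
  "r \<in> R_cell L \<gamma> U \<longleftrightarrow> (\<forall>p\<in>prob_simplex. prop_L L p = U \<longrightarrow> r \<in> \<gamma> p)"
  unfolding R_cell_def Gamma_cell_def level_set_def by auto

lemma mem_link_envelope_iff:
  "r \<in> link_envelope L \<gamma> \<epsilon> u \<longleftrightarrow>
     (\<forall>p\<in>prob_simplex. (INF a\<in>prop_L L p. infnorm (u - a)) < \<epsilon> \<longrightarrow> r \<in> \<gamma> p)"
proof -
  have "r \<in> link_envelope L \<gamma> \<epsilon> u \<longleftrightarrow>
      (\<forall>U\<in>cal_U L. (INF a\<in>U. infnorm (u - a)) < \<epsilon> \<longrightarrow> r \<in> R_cell L \<gamma> U)"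
    unfolding link_envelope_def INF_infnorm_commute by blast
  then show ?thesis
    unfolding cal_U_def mem_R_cell_iff by blast
qed

theorem proposition9:
  fixes L :: "real^'d \<Rightarrow> ('y::finite \<Rightarrow> real)"
    and \<gamma> :: "('y \<Rightarrow> real) \<Rightarrow> ('r::finite) set"
    and \<epsilon> :: real
    and \<psi> :: "real^'d \<Rightarrow> 'r"
  assumes "polyhedral_loss L"
    and "nonneg_loss L"
    and "is_property \<gamma>"
    and "\<epsilon> > 0"
  shows "(\<forall>u. \<psi> u \<in> link_envelope L \<gamma> \<epsilon> u) \<longleftrightarrow> eps_separated \<psi> (prop_L L) \<gamma> \<epsilon>"
  unfolding mem_link_envelope_iff eps_separated_def by (meson not_le)

end
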